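(* Let $\varrho,\widetilde{\varrho}:\mathbb{R}\to\mathbb{R}$ with $\varrho$ continuous, let $d\in\mathbb{N}^+$, $a<b$, $f:[a,b]^d\to\mathbb{R}$, and $\varepsilon>0$. Suppose (i) there is a function $\phi_\varrho$ generated by a $\varrho$-activated network with width $N$ and depth $L$ such that $|\phi_\varrho(\boldsymbol{x})-f(\boldsymbol{x})|<\varepsilon/2$ for all $\boldsymbol{x}\in[a,b]^d$; and (ii) for every $M>0$ and each $\delta\in(0,1)$ there exists a function $\varrho_\delta$ generated by a $\widetilde{\varrho}$-activated network with width $\widetilde{N}$ and depth $\widetilde{L}$ such that $\varrho_\delta\to\varrho$ uniformly on $[-M,M]$ as $\delta\to0^+$. Then there exists a function $\phi$ generated by a $\widetilde{\varrho}$-activated network with width $N\widetilde{N}$ and depth $L\widetilde{L}$ such that $|\phi(\boldsymbol{x})-f(\boldsymbol{x})|<\varepsilon$ for all $\boldsymbol{x}\in[a,b]^d$.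
   Context: For an activation $\eta:\mathbb{R}\to\mathbb{R}$ (applied to vectors entrywise), a function generated by an $\eta$-activated network with input dimension $n$, width $N$ and depth $L$ is a function of the form $\mathcal{L}_{\ell}\circ\eta\circ\mathcal{L}_{\ell-1}\circ\cdots\circ\eta\circ\mathcal{L}_0$ with $\ell\le L$ hidden layers, where the $\mathcal{L}_i$ are affine maps, $\mathcal{L}_0$ has domain $\mathbb{R}^n$, $\mathcal{L}_\ell$ has codomain $\mathbb{R}$, and every hidden layer has at most $N$ neurons. *)

theory Defs
  imports "HOL-Analysis.Analysis"
begin

text \<open>Vectors of dimension m are represented as functions nat => real; only the
entries with index < m are meaningful (the others are kept at 0).\<close>

definition aff :: "nat \<Rightarrow> nat \<Rightarrow> (nat \<Rightarrow> nat \<Rightarrow> real) \<Rightarrow> (nat \<Rightarrow> real) \<Rightarrow> (nat \<Rightarrow> real) \<Rightarrow> (nat \<Rightarrow> real)" where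
  "aff m k W c x = (\<lambda>i. if i < k then (\<Sum>j<m. W i j * x j) + c i else 0)"

definition act :: "(real \<Rightarrow> real) \<Rightarrow> nat \<Rightarrow> (nat \<Rightarrow> real) \<Rightarrow> (nat \<Rightarrow> real)" where
  "act \<eta> k x = (\<lambda>i. if i < k then \<eta> (x i) else 0)"

fun run :: "(real \<Rightarrow> real) \<Rightarrow> nat list \<Rightarrow> ((nat \<Rightarrow> nat \<Rightarrow> real) \<times> (nat \<Rightarrow> real)) list
             \<Rightarrow> (nat \<Rightarrow> real) \<Rightarrow> (nat \<Rightarrow> real)" where
  "run \<eta> (m # k # ds) ((W, c) # ps) x =
     (if ds = [] then aff m k W c x else run \<eta> (k # ds) ps (act \<eta> k (aff m k W c x)))"
| "run \<eta> _ _ x = x"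

text \<open>g is generated by an eta-activated network with input dimension n,
width N and depth L: at most L hidden layers, each with at most N neurons.\<close>
definition nn_fun :: "(real \<Rightarrow> real) \<Rightarrow> nat \<Rightarrow> nat \<Rightarrow> nat \<Rightarrow> ((nat \<Rightarrow> real) \<Rightarrow> real) \<Rightarrow> bool" where
  "nn_fun \<eta> n N L g \<longleftrightarrow>
     (\<exists>hs ps. length hs \<le> L \<and> (\<forall>h\<in>set hs. h \<le> N) \<and> length ps = length hs + 1 \<and>
        (\<forall>x. g x = run \<eta> (n # hs @ [1]) ps x 0))"

definition cube :: "nat \<Rightarrow> real \<Rightarrow> real \<Rightarrow> (nat \<Rightarrow> real) set" where
  "cube d a b = {x. (\<forall>i<d. a \<le> x i \<and> x i \<le> b) \<and> (\<forall>i\<ge>d. x i = 0)}"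

end

theory Submission
  imports Defs
begin

text \<open>Replace every activation \<open>\<rho>\<close> of the network for \<open>\<phi>\<^sub>\<rho>\<close> by \<open>\<sigma> = \<rho>\<^sub>\<delta>\<close>, keeping
  all weights. As \<open>\<sigma>\<close> is computed by a \<open>\<rho>t\<close>-network of width \<open>Nt\<close> and depth \<open>Lt\<close>,
  a \<open>\<sigma>\<close>-layer of width \<open>k\<close> is \<open>k\<close> parallel copies of that network, and the affine maps
  where consecutive blocks meet fuse into one; this gives a \<open>\<rho>t\<close>-network of width
  \<open>N * Nt\<close> and depth \<open>L * Lt\<close>. On the other hand, for fixed weights the output depends
  continuously on the activation, uniformly for inputs from the cube: layer by layer the
  pre-activations stay in a fixed interval \<open>[-M, M]\<close>, on which \<open>\<rho>\<close> is uniformly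
  continuous. So for small \<open>\<delta>\<close> the new network is \<open>\<epsilon>/2\<close>-close to \<open>\<phi>\<^sub>\<rho>\<close>.\<close>

section \<open>Networks as compositions of layers\<close>

text \<open>Unlike \<^const>\<open>run\<close>, this description is
  closed under composition, since adjacent affine maps fuse.\<close>

inductive nn_map :: "(real \<Rightarrow> real) \<Rightarrow> nat \<Rightarrow> nat \<Rightarrow> nat \<Rightarrow> nat
    \<Rightarrow> ((nat \<Rightarrow> real) \<Rightarrow> (nat \<Rightarrow> real)) \<Rightarrow> bool"
  for \<eta> where
  affine: "nn_map \<eta> m n L N (aff m n W c)"
| layer: "nn_map \<eta> k n L N G \<Longrightarrow> k \<le> N \<Longrightarrow> nn_map \<eta> m n (Suc L) N (G \<circ> act \<eta> k \<circ> aff m k W c)"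

lemma nn_map_mono:
  "nn_map \<eta> m n L N F \<Longrightarrow> L \<le> L' \<Longrightarrow> N \<le> N' \<Longrightarrow> nn_map \<eta> m n L' N' F"
proof (induction arbitrary: L' rule: nn_map.induct)
  case affine
  show ?case by (rule nn_map.affine)
next
  case (layer k n L N G m W c)
  then obtain L'' where "L' = Suc L''" "L \<le> L''" by (cases L') auto
  with layer show ?case by (simp only:) (rule nn_map.layer; simp)
qed

lemma aff_comp_aff:
  "aff k n V e \<circ> aff m k W c =
     aff m n (\<lambda>i j. \<Sum>l<k. V i l * W l j) (\<lambda>i. (\<Sum>l<k. V i l * c l) + e i)"
proof (intro ext)
  fix x i
  have "(\<Sum>l<k. V i l * ((\<Sum>j<m. W l j * x j) + c l)) =
        (\<Sum>j<m. (\<Sum>l<k. V i l * W l j) * x j) + (\<Sum>l<k. V i l * c l)"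
    by (simp add: distrib_left sum.distrib sum_distrib_left sum_distrib_right
        sum.swap[of _ "{..<k}"] mult.assoc)
  then show "(aff k n V e \<circ> aff m k W c) x i = aff m n (\<lambda>i j. \<Sum>l<k. V i l * W l j)
      (\<lambda>i. (\<Sum>l<k. V i l * c l) + e i) x i"
    unfolding aff_def by (auto intro!: sum.cong)
qed

lemma nn_map_comp_aff:
  assumes "nn_map \<eta> k n L N G"
  shows "nn_map \<eta> m n L N (G \<circ> aff m k W c)"
  using assms
proof cases
  case affine
  then show ?thesis by (simp add: aff_comp_aff nn_map.affine)
next
  case (layer k' L' G' V e)
  have "nn_map \<eta> m n (Suc L') N (G' \<circ> act \<eta> k' \<circ> (aff k k' V e \<circ> aff m k W c))"
    unfolding aff_comp_aff using layer by (intro nn_map.layer)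
  with layer show ?thesis by (simp only: comp_assoc)
qed

lemma nn_map_comp:
  "nn_map \<eta> m k L1 N F \<Longrightarrow> nn_map \<eta> k n L2 N G \<Longrightarrow> nn_map \<eta> m n (L1 + L2) N (G \<circ> F)"
proof (induction rule: nn_map.induct)
  case affine
  then show ?case by (metis nn_map_comp_aff nn_map_mono le_add2 order_refl)
next
  case (layer k' k L N F m W c)
  have "nn_map \<eta> m n (Suc (L + L2)) N ((G \<circ> F) \<circ> act \<eta> k' \<circ> aff m k' W c)"
    using layer.IH[OF layer.prems] layer.hyps(2) by (rule nn_map.layer)
  then show ?case by (simp only: comp_assoc add_Suc)
qed

lemma aff_eq_on_inputs: "(\<forall>j<m. x j = x' j) \<Longrightarrow> aff m k W c x = aff m k W c x'"
  unfolding aff_def by (auto intro!: ext sum.cong)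

lemma nn_map_eq_on_inputs: "nn_map \<eta> m n L N F \<Longrightarrow> (\<forall>j<m. x j = x' j) \<Longrightarrow> F x = F x'"
proof (induction rule: nn_map.induct)
  case (layer k n L N G m W c)
  then show ?case by (simp add: aff_eq_on_inputs[of m x x'])
qed (simp add: aff_eq_on_inputs)

lemma nn_map_run:
  "length ps = length hs + 1 \<Longrightarrow> \<forall>h\<in>set hs. h \<le> N \<Longrightarrow>
     nn_map \<eta> m n (length hs) N (run \<eta> (m # hs @ [n]) ps)"
proof (induction hs arbitrary: m ps)
  case Nil
  then obtain W c where "ps = [(W, c)]" by (cases ps) (auto simp: length_Suc_conv)
  moreover have "run \<eta> [m, n] [(W, c)] = aff m n W c" by (auto intro!: ext)
  ultimately show ?case by (simp add: nn_map.affine)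
next
  case (Cons h hs)
  then obtain W c ps' where ps: "ps = (W, c) # ps'" "length ps' = length hs + 1"
    by (cases ps) auto
  have "run \<eta> (m # (h # hs) @ [n]) ps = run \<eta> (h # hs @ [n]) ps' \<circ> act \<eta> h \<circ> aff m h W c"
    using ps by (auto intro!: ext)
  moreover have
    "nn_map \<eta> m n (Suc (length hs)) N (run \<eta> (h # hs @ [n]) ps' \<circ> act \<eta> h \<circ> aff m h W c)"
    using Cons.IH[OF ps(2)] Cons.prems(2) by (intro nn_map.layer) auto
  ultimately show ?case using ps by (simp only: length_Cons)
qed

lemma nn_map_imp_run:
  "nn_map \<eta> m n L N F \<Longrightarrow> \<exists>hs ps. length hs \<le> L \<and> (\<forall>h\<in>set hs. h \<le> N) \<and>
     length ps = length hs + 1 \<and> F = run \<eta> (m # hs @ [n]) ps"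
proof (induction rule: nn_map.induct)
  case (affine m n L N W c)
  show ?case by (intro exI[of _ "[]"] exI[of _ "[(W, c)]"]) (auto intro!: ext)
next
  case (layer k n L N G m W c)
  then obtain hs ps where "length hs \<le> L" "\<forall>h\<in>set hs. h \<le> N" "length ps = length hs + 1"
    "G = run \<eta> (k # hs @ [n]) ps" by blast
  with layer show ?case
    by (intro exI[of _ "k # hs"] exI[of _ "(W, c) # ps"]) (auto intro!: ext)
qed

lemma nn_fun_iff_nn_map:
  "nn_fun \<eta> n N L g \<longleftrightarrow> (\<exists>F. nn_map \<eta> n 1 L N F \<and> g = (\<lambda>x. F x 0))"
proof
  assume "nn_fun \<eta> n N L g"
  then obtain hs ps where "length hs \<le> L" "\<forall>h\<in>set hs. h \<le> N" "length ps = length hs + 1"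
    "\<forall>x. g x = run \<eta> (n # hs @ [1]) ps x 0"
    unfolding nn_fun_def by blast
  then show "\<exists>F. nn_map \<eta> n 1 L N F \<and> g = (\<lambda>x. F x 0)"
    by (intro exI[of _ "run \<eta> (n # hs @ [1]) ps"]) (metis nn_map_mono nn_map_run order_refl)
next
  assume "\<exists>F. nn_map \<eta> n 1 L N F \<and> g = (\<lambda>x. F x 0)"
  then show "nn_fun \<eta> n N L g"
    unfolding nn_fun_def by (blast dest: nn_map_imp_run)
qed

section \<open>Parallel copies of a network\<close>

lemma mod_add_mult_less: "p < k \<Longrightarrow> j < w \<Longrightarrow> p + k * j < k * (w::nat)"
proof -
  assume "p < k" "j < w"
  then have "p + k * j < k * Suc j" by simp
  also have "\<dots> \<le> k * w" using \<open>j < w\<close> by (intro mult_le_mono2) simp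
  finally show ?thesis .
qed

lemma sum_residue_class:
  assumes "p < (k::nat)"
  shows "(\<Sum>i<k*m. if i mod k = p then f i else 0) = (\<Sum>j<m. f (p + k*j))"
proof -
  have "(\<lambda>j. p + k*j) ` {..<m} = {i\<in>{..<k*m}. i mod k = p}"
  proof (intro equalityI subsetI)
    fix i assume "i \<in> {i\<in>{..<k*m}. i mod k = p}"
    then have "i = p + k * (i div k)" "i div k < m"
      by (auto simp: less_mult_imp_div_less mult.commute)
    then show "i \<in> (\<lambda>j. p + k*j) ` {..<m}" by blast
  qed (use assms mod_add_mult_less in auto)
  moreover have "inj_on (\<lambda>j. p + k*j) {..<m}"
    using assms by (auto simp: inj_on_def)
  ultimately have "(\<Sum>j<m. f (p + k*j)) = sum f {i\<in>{..<k*m}. i mod k = p}"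
    by (metis sum.reindex_cong)
  also have "\<dots> = (\<Sum>i<k*m. if i mod k = p then f i else 0)"
    by (rule sum.inter_filter) simp
  finally show ?thesis by simp
qed

text \<open>Copy number \<open>p < k\<close> of \<open>F\<close> reads and writes the coordinates \<open>\<equiv> p (mod k)\<close>.
  As this layout depends only on \<open>k\<close>, the layers of \<open>k\<close> parallel copies of a network
  line up with each other.\<close>

definition parallel :: "nat \<Rightarrow> nat \<Rightarrow> nat \<Rightarrow> ((nat \<Rightarrow> real) \<Rightarrow> (nat \<Rightarrow> real))
    \<Rightarrow> (nat \<Rightarrow> real) \<Rightarrow> (nat \<Rightarrow> real)" where
  "parallel k m n F y = (\<lambda>i. if i < k * n
     then F (\<lambda>j. if j < m then y (i mod k + k * j) else 0) (i div k) else 0)"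

lemma parallel_aff:
  "parallel k m n (aff m n W c) = aff (k * m) (k * n)
     (\<lambda>i i'. if i' mod k = i mod k then W (i div k) (i' div k) else 0) (\<lambda>i. c (i div k))"
proof (intro ext)
  fix y i
  show "parallel k m n (aff m n W c) y i = aff (k * m) (k * n)
     (\<lambda>i i'. if i' mod k = i mod k then W (i div k) (i' div k) else 0) (\<lambda>i. c (i div k)) y i"
  proof (cases "i < k * n")
    case True
    then have k: "k > 0" by (cases k) auto
    have "(\<Sum>i'<k*m. (if i' mod k = i mod k then W (i div k) (i' div k) else 0) * y i')
       = (\<Sum>i'<k*m. if i' mod k = i mod k then W (i div k) (i' div k) * y i' else 0)"
      by (intro sum.cong) auto
    also have "\<dots> = (\<Sum>j<m. W (i div k) ((i mod k + k*j) div k) * y (i mod k + k*j))"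
      using k by (intro sum_residue_class) simp
    also have "\<dots> = (\<Sum>j<m. W (i div k) j * y (i mod k + k*j))"
      using k by (intro sum.cong) auto
    finally show ?thesis
      using True by (simp add: parallel_def aff_def less_mult_imp_div_less mult.commute)
  qed (simp add: parallel_def aff_def)
qed

lemma parallel_layer:
  assumes "nn_map \<eta> w n L N G"
  shows "parallel k m n (G \<circ> act \<eta> w \<circ> aff m w W c) =
    parallel k w n G \<circ> act \<eta> (k * w) \<circ> parallel k m w (aff m w W c)"
proof (intro ext)
  fix y i
  show "parallel k m n (G \<circ> act \<eta> w \<circ> aff m w W c) y i =
    (parallel k w n G \<circ> act \<eta> (k * w) \<circ> parallel k m w (aff m w W c)) y i"
  proof (cases "i < k * n")
    case True
    define p where "p = i mod k"
    have p: "p < k" using True by (cases k) (auto simp: p_def)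
    have "act \<eta> w (aff m w W c (\<lambda>j. if j < m then y (p + k * j) else 0)) j =
        act \<eta> (k * w) (parallel k m w (aff m w W c) y) (p + k * j)" if "j < w" for j
    proof -
      have pj: "(p + k * j) mod k = p" "(p + k * j) div k = j" using p by simp_all
      show ?thesis
        unfolding act_def parallel_def pj using that mod_add_mult_less[OF p that] by simp
    qed
    then have "G (act \<eta> w (aff m w W c (\<lambda>j. if j < m then y (p + k * j) else 0))) =
        G (\<lambda>j. if j < w then act \<eta> (k * w) (parallel k m w (aff m w W c) y) (p + k * j) else 0)"
      by (intro nn_map_eq_on_inputs[OF assms]) simp
    then show ?thesis using True unfolding parallel_def[of k _ n] p_def by simp
  qed (simp add: parallel_def)
qed

lemma nn_map_parallel:
  "nn_map \<eta> m n L N F \<Longrightarrow> nn_map \<eta> (k * m) (k * n) L (k * N) (parallel k m n F)"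
proof (induction rule: nn_map.induct)
  case affine
  then show ?case by (simp add: parallel_aff nn_map.affine)
next
  case (layer w n L N G m W c)
  have "nn_map \<eta> (k * m) (k * n) (Suc L) (k * N)
      (parallel k w n G \<circ> act \<eta> (k * w) \<circ> parallel k m w (aff m w W c))"
    unfolding parallel_aff using layer by (intro nn_map.layer) simp_all
  then show ?case by (simp only: parallel_layer[OF layer.hyps(1)])
qed

lemma act_eq_parallel:
  assumes "\<And>t. \<sigma> t = F (\<lambda>i. if i = 0 then t else 0) 0"
  shows "act \<sigma> k = parallel k 1 1 F"
proof (intro ext)
  fix x i
  show "act \<sigma> k x i = parallel k 1 1 F x i"
  proof (cases "i < k")
    case True
    then have "(\<lambda>j. if j < 1 then x (i mod k + k * j) else 0) = (\<lambda>j. if j = 0 then x i else 0)"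
      by (auto intro!: ext)
    with True assms show ?thesis by (simp add: act_def parallel_def)
  qed (simp add: act_def parallel_def)
qed

lemma nn_map_replace_activation:
  assumes "nn_map \<sigma> m n L N F" and "\<And>k. nn_map \<eta> k k L' (k * N') (act \<sigma> k)"
  shows "nn_map \<eta> m n (L * L') (N * N') F"
  using assms(1)
proof (induction rule: nn_map.induct)
  case affine
  show ?case by (rule nn_map.affine)
next
  case (layer k n L N G m W c)
  have "nn_map \<eta> k k L' (N * N') (act \<sigma> k)"
    using layer.hyps(2) by (intro nn_map_mono[OF assms(2)]) simp_all
  from nn_map_comp[OF this layer.IH]
  have "nn_map \<eta> m n (L' + L * L') (N * N') ((G \<circ> act \<sigma> k) \<circ> aff m k W c)"
    by (rule nn_map_comp_aff)
  then show ?case by (simp only: comp_assoc mult_Suc)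
qed

lemma nn_fun_replace_activation:
  assumes "nn_fun \<sigma> n N L \<phi>"
    and "nn_fun \<eta> 1 N' L' g" and "\<And>t. \<sigma> t = g (\<lambda>i. if i = 0 then t else 0)"
  shows "nn_fun \<eta> n (N * N') (L * L') \<phi>"
proof -
  obtain G where G: "nn_map \<eta> 1 1 L' N' G" and g: "g = (\<lambda>x. G x 0)"
    using assms(2) by (auto simp: nn_fun_iff_nn_map)
  have "act \<sigma> k = parallel k 1 1 G" for k
    using assms(3) g by (intro act_eq_parallel) simp
  then have "nn_map \<eta> k k L' (k * N') (act \<sigma> k)" for k
    using nn_map_parallel[OF G, of k] by simp
  with assms(1) show ?thesis
    by (auto simp: nn_fun_iff_nn_map intro: nn_map_replace_activation)
qed

section \<open>Perturbing the activation\<close>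

lemma abs_sum_mult_le:
  fixes w x :: "nat \<Rightarrow> real"
  assumes "\<forall>j. \<bar>x j\<bar> \<le> B"
  shows "\<bar>\<Sum>j<m. w j * x j\<bar> \<le> (\<Sum>j<m. \<bar>w j\<bar>) * B"
proof -
  have "\<bar>\<Sum>j<m. w j * x j\<bar> \<le> (\<Sum>j<m. \<bar>w j\<bar> * \<bar>x j\<bar>)"
    by (rule order_trans[OF sum_abs]) (simp add: abs_mult)
  also have "\<dots> \<le> (\<Sum>j<m. \<bar>w j\<bar> * B)"
    using assms by (intro sum_mono mult_left_mono) simp_all
  finally show ?thesis by (simp add: sum_distrib_right)
qed

lemma row_abs_sum_le:
  fixes W :: "nat \<Rightarrow> nat \<Rightarrow> real"
  shows "i < k \<Longrightarrow> (\<Sum>j<m. \<bar>W i j\<bar>) \<le> (\<Sum>i<k. \<Sum>j<m. \<bar>W i j\<bar>)"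
  by (intro member_le_sum) (simp_all add: sum_nonneg)

lemma abs_aff_le:
  assumes "\<forall>j. \<bar>x j\<bar> \<le> B"
  shows "\<bar>aff m k W c x i\<bar> \<le> (\<Sum>i<k. \<Sum>j<m. \<bar>W i j\<bar>) * B + (\<Sum>i<k. \<bar>c i\<bar>)"
proof (cases "i < k")
  case True
  have B: "B \<ge> 0" using assms by (meson abs_ge_zero order_trans)
  have "\<bar>aff m k W c x i\<bar> \<le> \<bar>\<Sum>j<m. W i j * x j\<bar> + \<bar>c i\<bar>"
    using True by (simp add: aff_def)
  also have "\<dots> \<le> (\<Sum>j<m. \<bar>W i j\<bar>) * B + (\<Sum>i<k. \<bar>c i\<bar>)"
    using abs_sum_mult_le[OF assms] True by (intro add_mono) (auto intro: member_le_sum)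
  also have "\<dots> \<le> (\<Sum>i<k. \<Sum>j<m. \<bar>W i j\<bar>) * B + (\<Sum>i<k. \<bar>c i\<bar>)"
    using row_abs_sum_le[OF True] B by (simp add: mult_right_mono)
  finally show ?thesis .
next
  case False
  have "B \<ge> 0" using assms by (meson abs_ge_zero order_trans)
  with False show ?thesis by (simp add: aff_def sum_nonneg)
qed

lemma abs_aff_diff_le:
  assumes "\<forall>j. \<bar>x' j - x j\<bar> \<le> \<tau>"
  shows "\<bar>aff m k W c x' i - aff m k W c x i\<bar> \<le> (\<Sum>i<k. \<Sum>j<m. \<bar>W i j\<bar>) * \<tau>"
proof (cases "i < k")
  case True
  have \<tau>: "\<tau> \<ge> 0" using assms by (meson abs_ge_zero order_trans)
  have "\<bar>aff m k W c x' i - aff m k W c x i\<bar> = \<bar>\<Sum>j<m. W i j * (x' j - x j)\<bar>"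
    using True by (simp add: aff_def sum_subtractf right_diff_distrib)
  also have "\<dots> \<le> (\<Sum>j<m. \<bar>W i j\<bar>) * \<tau>"
    using assms by (rule abs_sum_mult_le)
  also have "\<dots> \<le> (\<Sum>i<k. \<Sum>j<m. \<bar>W i j\<bar>) * \<tau>"
    using row_abs_sum_le[OF True] \<tau> by (rule mult_right_mono)
  finally show ?thesis .
next
  case False
  have "\<tau> \<ge> 0" using assms by (meson abs_ge_zero order_trans)
  with False show ?thesis by (simp add: aff_def sum_nonneg)
qed

lemma act_bounded:
  assumes "continuous_on UNIV \<rho>"
  shows "\<exists>B'. \<forall>x. (\<forall>j. \<bar>x j\<bar> \<le> B) \<longrightarrow> (\<forall>i. \<bar>act \<rho> k x i\<bar> \<le> B')"
proof -
  have "compact (\<rho> ` {-B..B})"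
    using assms by (intro compact_continuous_image) (auto intro: continuous_on_subset)
  then have "bounded (\<rho> ` {-B..B})" by (rule compact_imp_bounded)
  then obtain B' where B': "\<forall>t\<in>{-B..B}. \<bar>\<rho> t\<bar> \<le> B'"
    unfolding bounded_real by blast
  have "\<bar>act \<rho> k x i\<bar> \<le> max B' 0" if x: "\<forall>j. \<bar>x j\<bar> \<le> B" for x i
  proof (cases "i < k")
    case True
    have "x i \<in> {-B..B}" using x[rule_format, of i] by (simp add: abs_le_iff)
    with B' True show ?thesis by (simp add: act_def le_max_iff_disj)
  qed (simp add: act_def)
  then show ?thesis by blast
qed

text \<open>Here \<open>G \<eta>\<close> is the map computed with activation \<open>\<eta>\<close> by a network whose
  architecture and weights are fixed. Perturbing the input together with the activation is
  what lets the property pass through the layers.\<close>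

definition perturbation_bound :: "(real \<Rightarrow> real) \<Rightarrow> ((real \<Rightarrow> real) \<Rightarrow> (nat \<Rightarrow> real) \<Rightarrow> (nat \<Rightarrow> real))
    \<Rightarrow> real \<Rightarrow> real \<Rightarrow> real \<Rightarrow> real \<Rightarrow> bool" where
  "perturbation_bound \<rho> G B M \<tau> e \<longleftrightarrow> (\<forall>\<sigma> x x'.
     (\<forall>t\<in>{-M..M}. \<bar>\<sigma> t - \<rho> t\<bar> \<le> \<tau>) \<longrightarrow> (\<forall>j. \<bar>x j\<bar> \<le> B) \<longrightarrow> (\<forall>j. \<bar>x' j - x j\<bar> \<le> \<tau>) \<longrightarrow>
     (\<forall>i. \<bar>G \<sigma> x' i - G \<rho> x i\<bar> \<le> e))"

definition perturbation_stable ::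
    "(real \<Rightarrow> real) \<Rightarrow> ((real \<Rightarrow> real) \<Rightarrow> (nat \<Rightarrow> real) \<Rightarrow> (nat \<Rightarrow> real)) \<Rightarrow> real \<Rightarrow> bool" where
  "perturbation_stable \<rho> G B \<longleftrightarrow> (\<exists>M>0. \<forall>e>0. \<exists>\<tau>>0. perturbation_bound \<rho> G B M \<tau> e)"

lemma perturbation_bound_mono:
  assumes "perturbation_bound \<rho> G B M \<tau> e" and "M \<le> M'" and "\<tau>' \<le> \<tau>"
  shows "perturbation_bound \<rho> G B M' \<tau>' e"
  unfolding perturbation_bound_def
proof (intro allI impI)
  fix \<sigma> :: "real \<Rightarrow> real" and x x' :: "nat \<Rightarrow> real" and i
  assume \<sigma>: "\<forall>t\<in>{-M'..M'}. \<bar>\<sigma> t - \<rho> t\<bar> \<le> \<tau>'" and x: "\<forall>j. \<bar>x j\<bar> \<le> B"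
    and x': "\<forall>j. \<bar>x' j - x j\<bar> \<le> \<tau>'"
  have "\<bar>\<sigma> t - \<rho> t\<bar> \<le> \<tau>" if "t \<in> {-M..M}" for t
  proof -
    have "t \<in> {-M'..M'}" using that \<open>M \<le> M'\<close> by simp
    with \<sigma> \<open>\<tau>' \<le> \<tau>\<close> show ?thesis by fastforce
  qed
  moreover have "\<bar>x' j - x j\<bar> \<le> \<tau>" for j
    using x'[rule_format, of j] \<open>\<tau>' \<le> \<tau>\<close> by linarith
  ultimately show "\<bar>G \<sigma> x' i - G \<rho> x i\<bar> \<le> e"
    using assms(1) x unfolding perturbation_bound_def by blast
qed

lemma perturbation_bound_comp:
  assumes F: "perturbation_bound \<rho> F B M \<tau> \<tau>'"
    and bounded: "\<forall>x. (\<forall>j. \<bar>x j\<bar> \<le> B) \<longrightarrow> (\<forall>i. \<bar>F \<rho> x i\<bar> \<le> B')"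
    and G: "perturbation_bound \<rho> G B' M \<tau>' e" and "\<tau> \<le> \<tau>'"
  shows "perturbation_bound \<rho> (\<lambda>\<eta>. G \<eta> \<circ> F \<eta>) B M \<tau> e"
  unfolding perturbation_bound_def
proof (intro allI impI)
  fix \<sigma> :: "real \<Rightarrow> real" and x x' :: "nat \<Rightarrow> real" and i
  assume \<sigma>: "\<forall>t\<in>{-M..M}. \<bar>\<sigma> t - \<rho> t\<bar> \<le> \<tau>" and x: "\<forall>j. \<bar>x j\<bar> \<le> B"
    and x': "\<forall>j. \<bar>x' j - x j\<bar> \<le> \<tau>"
  have "\<forall>i. \<bar>F \<sigma> x' i - F \<rho> x i\<bar> \<le> \<tau>'"
    using F \<sigma> x x' unfolding perturbation_bound_def by blast
  moreover have "\<forall>t\<in>{-M..M}. \<bar>\<sigma> t - \<rho> t\<bar> \<le> \<tau>'"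
    using \<sigma> \<open>\<tau> \<le> \<tau>'\<close> by fastforce
  ultimately show "\<bar>(G \<sigma> \<circ> F \<sigma>) x' i - (G \<rho> \<circ> F \<rho>) x i\<bar> \<le> e"
    using G bounded x unfolding perturbation_bound_def by simp
qed

lemma perturbation_stable_comp:
  assumes F: "perturbation_stable \<rho> F B"
    and bounded: "\<forall>x. (\<forall>j. \<bar>x j\<bar> \<le> B) \<longrightarrow> (\<forall>i. \<bar>F \<rho> x i\<bar> \<le> B')"
    and G: "perturbation_stable \<rho> G B'"
  shows "perturbation_stable \<rho> (\<lambda>\<eta>. G \<eta> \<circ> F \<eta>) B"
proof -
  obtain MF where "MF > 0" and MF: "\<forall>e>0. \<exists>\<tau>>0. perturbation_bound \<rho> F B MF \<tau> e"
    using F unfolding perturbation_stable_def by blast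
  obtain MG where MG: "\<forall>e>0. \<exists>\<tau>>0. perturbation_bound \<rho> G B' MG \<tau> e"
    using G unfolding perturbation_stable_def by blast
  have "\<exists>\<tau>>0. perturbation_bound \<rho> (\<lambda>\<eta>. G \<eta> \<circ> F \<eta>) B (max MF MG) \<tau> e" if "e > 0" for e
  proof -
    obtain \<tau>G where "\<tau>G > 0" and "perturbation_bound \<rho> G B' MG \<tau>G e"
      using MG \<open>e > 0\<close> by blast
    have G': "perturbation_bound \<rho> G B' (max MF MG) \<tau>G e"
      using \<open>perturbation_bound \<rho> G B' MG \<tau>G e\<close> by (rule perturbation_bound_mono) simp_all
    obtain \<tau>F where "\<tau>F > 0" and "perturbation_bound \<rho> F B MF \<tau>F \<tau>G"
      using MF \<open>\<tau>G > 0\<close> by blast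
    have "perturbation_bound \<rho> F B (max MF MG) (min \<tau>F \<tau>G) \<tau>G"
      using \<open>perturbation_bound \<rho> F B MF \<tau>F \<tau>G\<close> by (rule perturbation_bound_mono) simp_all
    from this bounded G' have "perturbation_bound \<rho> (\<lambda>\<eta>. G \<eta> \<circ> F \<eta>) B (max MF MG) (min \<tau>F \<tau>G) e"
      by (rule perturbation_bound_comp) simp
    with \<open>\<tau>F > 0\<close> \<open>\<tau>G > 0\<close> show ?thesis by (intro exI[of _ "min \<tau>F \<tau>G"]) simp
  qed
  with \<open>MF > 0\<close> show ?thesis
    unfolding perturbation_stable_def by (intro exI[of _ "max MF MG"]) auto
qed

lemma perturbation_stable_aff: "perturbation_stable \<rho> (\<lambda>_. aff m k W c) B"
  unfolding perturbation_stable_def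
proof (rule exI[of _ 1], intro conjI allI impI)
  fix e :: real assume "e > 0"
  define C where "C = (\<Sum>i<k. \<Sum>j<m. \<bar>W i j\<bar>) + 1"
  have "C > 0" unfolding C_def by (simp add: sum_nonneg add_nonneg_pos)
  have "\<bar>aff m k W c x' i - aff m k W c x i\<bar> \<le> e" if "\<forall>j. \<bar>x' j - x j\<bar> \<le> e / C" for x x' i
  proof -
    have "\<bar>aff m k W c x' i - aff m k W c x i\<bar> \<le> (\<Sum>i<k. \<Sum>j<m. \<bar>W i j\<bar>) * (e / C)"
      using that by (rule abs_aff_diff_le)
    also have "\<dots> \<le> C * (e / C)"
      using \<open>C > 0\<close> \<open>e > 0\<close> by (intro mult_right_mono) (simp_all add: C_def)
    finally show ?thesis using \<open>C > 0\<close> by simp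
  qed
  then show "\<exists>\<tau>>0. perturbation_bound \<rho> (\<lambda>_. aff m k W c) B 1 \<tau> e"
    using \<open>C > 0\<close> \<open>e > 0\<close> unfolding perturbation_bound_def by (intro exI[of _ "e / C"]) auto
qed simp

lemma perturbation_stable_act:
  assumes "continuous_on UNIV \<rho>"
  shows "perturbation_stable \<rho> (\<lambda>\<eta>. act \<eta> k) B"
  unfolding perturbation_stable_def
proof (rule exI[of _ "\<bar>B\<bar> + 1"], intro conjI allI impI)
  define M where "M = \<bar>B\<bar> + 1"
  fix e :: real assume "e > 0"
  have "uniformly_continuous_on {-M..M} \<rho>"
    using assms by (intro compact_uniformly_continuous) (auto intro: continuous_on_subset)
  then obtain d where "d > 0"
    and d: "\<forall>s\<in>{-M..M}. \<forall>t\<in>{-M..M}. dist s t < d \<longrightarrow> dist (\<rho> s) (\<rho> t) < e / 2"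
    using \<open>e > 0\<close> unfolding uniformly_continuous_on_def by (meson half_gt_zero)
  define \<tau> where "\<tau> = min (e / 2) (min 1 (d / 2))"
  have "\<bar>act \<sigma> k x' i - act \<rho> k x i\<bar> \<le> e"
    if \<sigma>: "\<forall>t\<in>{-M..M}. \<bar>\<sigma> t - \<rho> t\<bar> \<le> \<tau>" and x: "\<forall>j. \<bar>x j\<bar> \<le> B"
      and x': "\<forall>j. \<bar>x' j - x j\<bar> \<le> \<tau>" for \<sigma> x x' i
  proof (cases "i < k")
    case True
    have "\<bar>x i\<bar> \<le> B" "\<bar>x' i - x i\<bar> \<le> \<tau>" "\<tau> \<le> 1" "\<tau> \<le> e / 2" "\<tau> < d"
      using x x' \<open>d > 0\<close> by (auto simp: \<tau>_def)
    then have "x i \<in> {-M..M}" "x' i \<in> {-M..M}" "dist (x' i) (x i) < d"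
      by (auto simp: M_def dist_real_def)
    then have "\<bar>\<sigma> (x' i) - \<rho> (x' i)\<bar> \<le> e / 2" "\<bar>\<rho> (x' i) - \<rho> (x i)\<bar> < e / 2"
      using \<sigma> d \<open>\<tau> \<le> e / 2\<close> by (fastforce simp: dist_real_def)+
    then have "\<bar>\<sigma> (x' i) - \<rho> (x i)\<bar> \<le> e" by linarith
    with True show ?thesis by (simp add: act_def)
  qed (use \<open>e > 0\<close> in \<open>simp add: act_def\<close>)
  moreover have "\<tau> > 0" using \<open>e > 0\<close> \<open>d > 0\<close> by (simp add: \<tau>_def)
  ultimately show "\<exists>\<tau>>0. perturbation_bound \<rho> (\<lambda>\<eta>. act \<eta> k) B M \<tau> e"
    unfolding perturbation_bound_def by blast
qed simp

lemma perturbation_stable_run: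
  assumes "continuous_on UNIV \<rho>" and "length ps = length hs + 1"
  shows "perturbation_stable \<rho> (\<lambda>\<eta>. run \<eta> (m # hs @ [n]) ps) B"
  using assms(2)
proof (induction hs arbitrary: m ps B)
  case Nil
  then obtain W c where "ps = [(W, c)]" by (cases ps) (auto simp: length_Suc_conv)
  then have "(\<lambda>\<eta>. run \<eta> (m # [] @ [n]) ps) = (\<lambda>_. aff m n W c)" by (auto intro!: ext)
  then show ?case by (simp add: perturbation_stable_aff)
next
  case (Cons h hs m ps B)
  then obtain W c ps' where ps: "ps = (W, c) # ps'" "length ps' = length hs + 1"
    by (cases ps) auto
  obtain B1 where B1: "\<forall>x. (\<forall>j. \<bar>x j\<bar> \<le> B) \<longrightarrow> (\<forall>i. \<bar>aff m h W c x i\<bar> \<le> B1)"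
    using abs_aff_le by blast
  obtain B2 where B2: "\<forall>x. (\<forall>j. \<bar>x j\<bar> \<le> B1) \<longrightarrow> (\<forall>i. \<bar>act \<rho> h x i\<bar> \<le> B2)"
    using act_bounded[OF assms(1)] by blast
  have "perturbation_stable \<rho> (\<lambda>\<eta>. run \<eta> (h # hs @ [n]) ps' \<circ> act \<eta> h) B1"
    using perturbation_stable_act[OF assms(1)] B2 Cons.IH[OF ps(2)]
    by (rule perturbation_stable_comp)
  with perturbation_stable_aff B1
  have "perturbation_stable \<rho> (\<lambda>\<eta>. run \<eta> (h # hs @ [n]) ps' \<circ> act \<eta> h \<circ> aff m h W c) B"
    by (rule perturbation_stable_comp)
  moreover have "(\<lambda>\<eta>. run \<eta> (h # hs @ [n]) ps' \<circ> act \<eta> h \<circ> aff m h W c) =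
      (\<lambda>\<eta>. run \<eta> (m # (h # hs) @ [n]) ps)"
    using ps by (auto intro!: ext)
  ultimately show ?case by simp
qed

lemma nn_fun_perturb_activation:
  assumes "continuous_on UNIV \<rho>" and "nn_fun \<rho> n N L \<phi>" and "e > 0"
  shows "\<exists>M>0. \<exists>\<tau>>0. \<forall>\<sigma>. (\<forall>t\<in>{-M..M}. \<bar>\<sigma> t - \<rho> t\<bar> \<le> \<tau>) \<longrightarrow>
    (\<exists>\<phi>'. nn_fun \<sigma> n N L \<phi>' \<and> (\<forall>x. (\<forall>j. \<bar>x j\<bar> \<le> B) \<longrightarrow> \<bar>\<phi>' x - \<phi> x\<bar> \<le> e))"
proof -
  obtain hs ps where hs: "length hs \<le> L" "\<forall>h\<in>set hs. h \<le> N" "length ps = length hs + 1"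
    and \<phi>: "\<And>x. \<phi> x = run \<rho> (n # hs @ [1]) ps x 0"
    using assms(2) unfolding nn_fun_def by blast
  obtain M where "M > 0"
    and "\<forall>e>0. \<exists>\<tau>>0. perturbation_bound \<rho> (\<lambda>\<eta>. run \<eta> (n # hs @ [1]) ps) B M \<tau> e"
    using perturbation_stable_run[OF assms(1) hs(3)] unfolding perturbation_stable_def by blast
  then obtain \<tau> where "\<tau> > 0"
    and stable: "perturbation_bound \<rho> (\<lambda>\<eta>. run \<eta> (n # hs @ [1]) ps) B M \<tau> e"
    using assms(3) by blast
  have "\<exists>\<phi>'. nn_fun \<sigma> n N L \<phi>' \<and> (\<forall>x. (\<forall>j. \<bar>x j\<bar> \<le> B) \<longrightarrow> \<bar>\<phi>' x - \<phi> x\<bar> \<le> e)"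
    if \<sigma>: "\<forall>t\<in>{-M..M}. \<bar>\<sigma> t - \<rho> t\<bar> \<le> \<tau>" for \<sigma>
  proof (intro exI[of _ "\<lambda>x. run \<sigma> (n # hs @ [1]) ps x 0"] conjI allI impI)
    show "nn_fun \<sigma> n N L (\<lambda>x. run \<sigma> (n # hs @ [1]) ps x 0)"
      unfolding nn_fun_def using hs by (intro exI[of _ hs] exI[of _ ps]) simp
    fix x :: "nat \<Rightarrow> real" assume "\<forall>j. \<bar>x j\<bar> \<le> B"
    with stable \<sigma> \<open>\<tau> > 0\<close> show "\<bar>run \<sigma> (n # hs @ [1]) ps x 0 - \<phi> x\<bar> \<le> e"
      unfolding perturbation_bound_def \<phi> by simp
  qed
  with \<open>M > 0\<close> \<open>\<tau> > 0\<close> show ?thesis by blast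
qed

lemma uniform_limit_nn_fun_close:
  fixes r :: "real \<Rightarrow> real \<Rightarrow> real" and \<rho> :: "real \<Rightarrow> real"
  assumes "uniform_limit S r \<rho> (at_right 0)"
    and "\<forall>\<delta>\<in>{0<..<1}. \<exists>g. nn_fun \<eta> 1 N L g \<and> (\<forall>t. r \<delta> t = g (\<lambda>i. if i = 0 then t else 0))"
    and "\<tau> > 0"
  shows "\<exists>g. nn_fun \<eta> 1 N L g \<and> (\<forall>t\<in>S. \<bar>g (\<lambda>i. if i = 0 then t else 0) - \<rho> t\<bar> \<le> \<tau>)"
proof -
  have "\<forall>\<^sub>F \<delta> in at_right 0. \<forall>t\<in>S. dist (r \<delta> t) (\<rho> t) < \<tau>"
    using assms(1,3) unfolding uniform_limit_iff by blast
  moreover have "\<forall>\<^sub>F \<delta> in at_right 0. \<delta> \<in> {0<..<(1::real)}"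
    by (rule eventually_at_right_real) simp
  ultimately have "\<forall>\<^sub>F \<delta> in at_right 0. \<delta> \<in> {0<..<1} \<and> (\<forall>t\<in>S. \<bar>r \<delta> t - \<rho> t\<bar> \<le> \<tau>)"
    by eventually_elim (auto simp: dist_real_def less_imp_le)
  then obtain \<delta> where "\<delta> \<in> {0<..<1}" and "\<forall>t\<in>S. \<bar>r \<delta> t - \<rho> t\<bar> \<le> \<tau>"
    using eventually_happens'[OF trivial_limit_at_right_real] by blast
  with assms(2) show ?thesis by fastforce
qed

lemma abs_le_of_mem_cube: "x \<in> cube d a b \<Longrightarrow> \<bar>x j\<bar> \<le> \<bar>a\<bar> + \<bar>b\<bar>"
  by (cases "j < d") (auto simp: cube_def)

theorem lemma9:
  fixes \<rho> \<rho>t :: "real \<Rightarrow> real" and d N L Nt Lt :: nat and a b \<epsilon> :: real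
    and f :: "(nat \<Rightarrow> real) \<Rightarrow> real"
  assumes "continuous_on UNIV \<rho>"
    and "d \<ge> 1" and "a < b" and "\<epsilon> > 0"
    and "\<exists>\<phi>. nn_fun \<rho> d N L \<phi> \<and> (\<forall>x\<in>cube d a b. \<bar>\<phi> x - f x\<bar> < \<epsilon> / 2)"
    and "\<forall>M>0. \<exists>r :: real \<Rightarrow> real \<Rightarrow> real.
           (\<forall>\<delta>\<in>{0<..<1}. \<exists>g. nn_fun \<rho>t 1 Nt Lt g \<and> (\<forall>t. r \<delta> t = g (\<lambda>i. if i = 0 then t else 0)))
           \<and> uniform_limit {-M..M} r \<rho> (at_right 0)"
  shows "\<exists>\<phi>. nn_fun \<rho>t d (N * Nt) (L * Lt) \<phi> \<and> (\<forall>x\<in>cube d a b. \<bar>\<phi> x - f x\<bar> < \<epsilon>)"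
proof -
  obtain \<phi> where "nn_fun \<rho> d N L \<phi>" and approx: "\<forall>x\<in>cube d a b. \<bar>\<phi> x - f x\<bar> < \<epsilon> / 2"
    using assms(5) by blast
  then obtain M \<tau> where "M > 0" "\<tau> > 0" and perturb: "\<forall>\<sigma>. (\<forall>t\<in>{-M..M}. \<bar>\<sigma> t - \<rho> t\<bar> \<le> \<tau>) \<longrightarrow>
      (\<exists>\<phi>'. nn_fun \<sigma> d N L \<phi>' \<and> (\<forall>x. (\<forall>j. \<bar>x j\<bar> \<le> \<bar>a\<bar> + \<bar>b\<bar>) \<longrightarrow> \<bar>\<phi>' x - \<phi> x\<bar> \<le> \<epsilon> / 2))"
    using nn_fun_perturb_activation[OF assms(1)] half_gt_zero[OF \<open>\<epsilon> > 0\<close>] by blast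
  obtain r :: "real \<Rightarrow> real \<Rightarrow> real" where
    r: "\<forall>\<delta>\<in>{0<..<1}. \<exists>g. nn_fun \<rho>t 1 Nt Lt g \<and> (\<forall>t. r \<delta> t = g (\<lambda>i. if i = 0 then t else 0))"
    and lim: "uniform_limit {-M..M} r \<rho> (at_right 0)"
    using assms(6) \<open>M > 0\<close> by blast
  obtain g where g: "nn_fun \<rho>t 1 Nt Lt g"
    and close: "\<forall>t\<in>{-M..M}. \<bar>g (\<lambda>i. if i = 0 then t else 0) - \<rho> t\<bar> \<le> \<tau>"
    using uniform_limit_nn_fun_close[OF lim r \<open>\<tau> > 0\<close>] by blast
  define \<sigma> where "\<sigma> t = g (\<lambda>i. if i = 0 then t else 0)" for t
  have "\<forall>t\<in>{-M..M}. \<bar>\<sigma> t - \<rho> t\<bar> \<le> \<tau>"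
    using close by (simp add: \<sigma>_def)
  with perturb obtain \<phi>' where \<sigma>: "nn_fun \<sigma> d N L \<phi>'"
    and \<phi>': "\<forall>x. (\<forall>j. \<bar>x j\<bar> \<le> \<bar>a\<bar> + \<bar>b\<bar>) \<longrightarrow> \<bar>\<phi>' x - \<phi> x\<bar> \<le> \<epsilon> / 2"
    by blast
  have "nn_fun \<rho>t d (N * Nt) (L * Lt) \<phi>'"
    using \<sigma> g by (rule nn_fun_replace_activation) (simp add: \<sigma>_def)
  moreover have "\<bar>\<phi>' x - f x\<bar> < \<epsilon>" if "x \<in> cube d a b" for x
  proof -
    have "\<bar>\<phi>' x - \<phi> x\<bar> \<le> \<epsilon> / 2" "\<bar>\<phi> x - f x\<bar> < \<epsilon> / 2"
      using \<phi>' abs_le_of_mem_cube[OF that] approx that by blast+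
    then show ?thesis by linarith
  qed
  ultimately show ?thesis by blast
qed

end
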